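(* In the setting of the context, for every $\alpha>2$ there exists a constant $C_\alpha>0$ such that $E_\varepsilon\ge C_\alpha\,\varepsilon^{\frac{3}{\alpha+1}-1}$ for all $0<\varepsilon\le\varepsilon^*$. In the case where the solid has locally a flat bottom (see context), there exists $C_\infty>0$ such that $E_\varepsilon\ge C_\infty\varepsilon^{-1}$ for all $0<\varepsilon\le\varepsilon^*$.
   Context: Notation: $e_2=(0,1)$. Geometry: $\mathsf C\subset\mathbb R^2$ is a smooth bounded connected open set, symmetric with respect to $\{\xi_1=0\}$, with $0\in\partial\mathsf C$, such that near the origin $\partial\mathsf C$ is a segment of $\{\xi_2=0\}$ with $\mathsf C$ locally above it. $S_0$ is compact, connected, symmetric with respect to $\{\xi_1=0\}$, and $\varepsilon^*>0$ is such that $S_\varepsilon:=S_0+\varepsilon e_2\subset\mathsf C$ for $0<\varepsilon\le\varepsilon^*$. In the cusp case there are $\kappa>0$, $\alpha>0$, $\delta^*>0$ such that for $0\le\varepsilon\le\varepsilon^*$, near the origin $\mathsf C\setminus S_\varepsilon$ coincides with $\{|\xi_1|<\delta^*,\ 0<\xi_2<\kappa|\xi_1|^{1+\alpha}+\varepsilon\}$. In the flat bottom case, this is replaced by: near the origin $\mathsf C\setminus S_\varepsilon$ coincides with $\{|\xi_1|<\delta^*,\ 0<\xi_2<h(\xi_1)+\varepsilon\}$ where $h\ge0$ is a smooth function vanishing on a neighbourhood of $0$. Let $\Omega_\varepsilon:=(\mathsf C\setminus S_\varepsilon)\cap\{\xi_1<0\}$, $\Gamma_\varepsilon:=\partial S_\varepsilon\cap\{\xi_1<0\}$,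 $n$ the outward unit normal to $\Omega_\varepsilon$. For $\varepsilon>0$, $U_\varepsilon\in H^1(\Omega_\varepsilon)$ is a weak solution of $\Delta U_\varepsilon=0$ in $\Omega_\varepsilon$, $\partial_nU_\varepsilon=n\cdot e_2$ on $\Gamma_\varepsilon$, $\partial_nU_\varepsilon=0$ on $\partial\Omega_\varepsilon\setminus\Gamma_\varepsilon$, and $E_\varepsilon=\int_{\Omega_\varepsilon}|\nabla U_\varepsilon|^2d\xi$. *)

theory Defs
  imports "HOL-Analysis.Analysis"
begin

text \<open>Points of the plane are elements of real^2; coordinate xi_1 is x$1, xi_2 is x$2.\<close>

definition e2 :: "real^2" where
  "e2 = axis 2 1"

definition reflect1 :: "real^2 \<Rightarrow> real^2" where
  "reflect1 x = (\<chi> i. if i = 1 then - (x$1) else x$i)"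

definition symmetric1 :: "(real^2) set \<Rightarrow> bool" where
  "symmetric1 A \<longleftrightarrow> reflect1 ` A = A"

definition smooth_fun :: "(real \<Rightarrow> real) \<Rightarrow> bool" where
  "smooth_fun h \<longleftrightarrow> (\<forall>n x. (deriv ^^ n) h differentiable (at x))"

definition smooth_domain :: "(real^2) set \<Rightarrow> bool" where
  "smooth_domain C \<longleftrightarrow> open C \<and>
     (\<forall>p\<in>frontier C. \<exists>r>0. \<exists>u v h. norm u = 1 \<and> norm v = 1 \<and> u \<bullet> v = 0 \<and>
        smooth_fun h \<and>
        C \<inter> ball p r = {x \<in> ball p r. (x - p) \<bullet> u < h ((x - p) \<bullet> v)})"

definition C1c :: "(real^2 \<Rightarrow> real) \<Rightarrow> (real^2 \<Rightarrow> real^2 \<Rightarrow> real) \<Rightarrow> bool" where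
  "C1c \<Phi> \<Phi>' \<longleftrightarrow> (\<forall>x. (\<Phi> has_derivative \<Phi>' x) (at x)) \<and>
     (\<forall>v. continuous_on UNIV (\<lambda>x. \<Phi>' x v)) \<and>
     compact (closure {x. \<Phi> x \<noteq> 0})"

definition L2_on :: "(real^2) set \<Rightarrow> (real^2 \<Rightarrow> 'b::euclidean_space) \<Rightarrow> bool" where
  "L2_on \<Omega> f \<longleftrightarrow> f \<in> borel_measurable (lebesgue_on \<Omega>) \<and>
     integrable (lebesgue_on \<Omega>) (\<lambda>x. (norm (f x))^2)"

definition H1_weak_grad :: "(real^2) set \<Rightarrow> (real^2 \<Rightarrow> real) \<Rightarrow> (real^2 \<Rightarrow> real^2) \<Rightarrow> bool" where
  "H1_weak_grad \<Omega> U G \<longleftrightarrow> L2_on \<Omega> U \<and> L2_on \<Omega> G \<and>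
     (\<forall>\<phi> \<phi>'. C1c \<phi> \<phi>' \<and> closure {x. \<phi> x \<noteq> 0} \<subseteq> \<Omega> \<longrightarrow>
        (\<forall>v. integral\<^sup>L (lebesgue_on \<Omega>) (\<lambda>x. U x * \<phi>' x v)
             = - integral\<^sup>L (lebesgue_on \<Omega>) (\<lambda>x. (G x \<bullet> v) * \<phi> x)))"

definition S_eps :: "(real^2) set \<Rightarrow> real \<Rightarrow> (real^2) set" where
  "S_eps S0 \<epsilon> = (\<lambda>x. x + \<epsilon> *\<^sub>R e2) ` S0"

definition Omega_eps :: "(real^2) set \<Rightarrow> (real^2) set \<Rightarrow> real \<Rightarrow> (real^2) set" where
  "Omega_eps C S0 \<epsilon> = (C - S_eps S0 \<epsilon>) \<inter> {x. x$1 < 0}"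

text \<open>Weak formulation of: Delta U = 0 in Omega_eps, d_n U = n.e2 on Gamma_eps,
  d_n U = 0 on the rest of the boundary. The boundary term
  int_{Gamma_eps} (n.e2) Phi dsigma is written, via the divergence theorem on
  S_eps cap {xi_1<0} (whose normal on the symmetry line is horizontal), as
  - int_{S_eps cap {xi_1<0}} d_2 Phi.\<close>
definition weak_neumann_sol ::
  "(real^2) set \<Rightarrow> (real^2) set \<Rightarrow> real \<Rightarrow> (real^2 \<Rightarrow> real) \<Rightarrow> (real^2 \<Rightarrow> real^2) \<Rightarrow> bool" where
  "weak_neumann_sol C S0 \<epsilon> U G \<longleftrightarrow>
     H1_weak_grad (Omega_eps C S0 \<epsilon>) U G \<and>
     (\<forall>\<Phi> \<Phi>'. C1c \<Phi> \<Phi>' \<longrightarrow>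
        integral\<^sup>L (lebesgue_on (Omega_eps C S0 \<epsilon>)) (\<lambda>x. \<Phi>' x (G x))
        = - integral\<^sup>L (lebesgue_on (S_eps S0 \<epsilon> \<inter> {x. x$1 < 0})) (\<lambda>x. \<Phi>' x e2))"

definition energy :: "(real^2) set \<Rightarrow> (real^2 \<Rightarrow> real^2) \<Rightarrow> real" where
  "energy \<Omega> G = integral\<^sup>L (lebesgue_on \<Omega>) (\<lambda>x. (norm (G x))^2)"

end

theory Submission
  imports Defs
begin

text \<open>Testing the weak formulation with a compactly supported C^1 function Phi and bounding
  the volume term by the AM-GM inequality gives the duality bound
  (int_{S_eps, xi_1 < 0} d_2 Phi)^2 <= ||grad Phi||^2_{L^2(Omega_eps)} E_eps.
  A test function equal to xi_2 on C yields E_eps >= |S_0 \<inter> {xi_1 < 0}|^2 / |C| uniformly in eps.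
  Near the contact point take Phi(xi) = T(xi_1 / l) T(xi_2 / H) with a plateau function T and H
  fixed: inside Omega_eps its gradient lives in the fluid layer of width 2l and height
  g >= eps + sup_{|xi_1| <= 2l} h, so ||grad Phi||^2 <= 32 g / l, while d_2 Phi <= -1/H on a
  rectangle of area l H / 4 inside the solid. Hence E_eps >= l^3 / (512 g). For the cusp
  h = kappa |xi_1|^(1+alpha) the width l = eps^(1/(1+alpha)) makes g of order eps, giving
  E_eps >~ eps^(3/(alpha+1) - 1); for a flat bottom l is fixed and g = eps. As the exponent is
  nonpositive for alpha >= 2, the uniform bound covers the remaining range of eps.\<close>

section \<open>A C^1 plateau function\<close>

definition pos_sq :: "real \<Rightarrow> real" where
  "pos_sq t = (max 0 t)\<^sup>2"

lemma has_real_derivative_pos_sq: "(pos_sq has_real_derivative 2 * max 0 t) (at t)"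
proof -
  consider "t < 0" | "t = 0" | "t > 0" by linarith
  then show ?thesis
  proof cases
    case 1
    have "((\<lambda>s. 0) has_real_derivative 0) (at t)" by simp
    then have "(pos_sq has_real_derivative 0) (at t)"
      by (rule has_field_derivative_transform_within_open[where S="{..<0}"])
         (use 1 in \<open>auto simp: pos_sq_def\<close>)
    then show ?thesis using 1 by simp
  next
    case 2
    have "((\<lambda>y. max 0 y) \<longlongrightarrow> max 0 0) (at (0::real))" by (intro tendsto_intros)
    moreover have "\<forall>\<^sub>F y in at 0. max 0 y = (pos_sq y - pos_sq 0) / (y - 0)"
      by (auto simp: eventually_at_filter pos_sq_def power2_eq_square max_def)
    ultimately have "((\<lambda>y. (pos_sq y - pos_sq 0) / (y - 0)) \<longlongrightarrow> 0) (at 0)"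
      by (simp add: tendsto_cong)
    then show ?thesis using 2 by (simp add: has_field_derivative_iff)
  next
    case 3
    have "((\<lambda>s. s\<^sup>2) has_real_derivative 2 * max 0 t) (at t)"
      using 3 by (auto intro!: derivative_eq_intros)
    then show ?thesis
      by (rule has_field_derivative_transform_within_open[where S="{0<..}"])
         (use 3 in \<open>auto simp: pos_sq_def\<close>)
  qed
qed

lemma has_real_derivative_pos_sq_comp [derivative_intros]:
  "(f has_real_derivative f') (at x within S) \<Longrightarrow>
    ((\<lambda>x. pos_sq (f x)) has_real_derivative 2 * max 0 (f x) * f') (at x within S)"
  using DERIV_chain2[OF has_real_derivative_pos_sq] .

definition smooth_step :: "real \<Rightarrow> real" where
  "smooth_step u = 2 * pos_sq u - 4 * pos_sq (u - 1/2) + 2 * pos_sq (u - 1)"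

definition smooth_step' :: "real \<Rightarrow> real" where
  "smooth_step' u = 4 * max 0 u - 8 * max 0 (u - 1/2) + 4 * max 0 (u - 1)"

lemma has_real_derivative_smooth_step [derivative_intros]:
  "(f has_real_derivative f') (at x within S) \<Longrightarrow>
    ((\<lambda>x. smooth_step (f x)) has_real_derivative smooth_step' (f x) * f') (at x within S)"
  unfolding smooth_step_def smooth_step'_def
  by (auto intro!: derivative_eq_intros simp: algebra_simps)

lemma continuous_on_smooth_step: "continuous_on UNIV smooth_step"
  unfolding smooth_step_def pos_sq_def by (intro continuous_intros)

lemma continuous_on_smooth_step': "continuous_on UNIV smooth_step'"
  unfolding smooth_step'_def by (intro continuous_intros)

lemma smooth_step_cases:
  obtains "u \<le> 0" "smooth_step u = 0" "smooth_step' u = 0"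
  | "0 \<le> u" "u \<le> 1/2" "smooth_step u = 2 * u\<^sup>2" "smooth_step' u = 4 * u"
  | "1/2 \<le> u" "u \<le> 1" "smooth_step u = 1 - 2 * (1 - u)\<^sup>2" "smooth_step' u = 4 * (1 - u)"
  | "1 \<le> u" "smooth_step u = 1" "smooth_step' u = 0"
  by (cases "u \<le> 0"; cases "u \<le> 1/2"; cases "u \<le> 1")
     (auto simp: smooth_step_def smooth_step'_def pos_sq_def power2_eq_square algebra_simps)

lemma smooth_step_bounds: "0 \<le> smooth_step u" "smooth_step u \<le> 1"
proof -
  have "u\<^sup>2 \<le> (1/2)\<^sup>2" if "0 \<le> u" "u \<le> 1/2"
    using that by (intro power_mono) auto
  moreover have "(1 - u)\<^sup>2 \<le> (1/2)\<^sup>2" if "1/2 \<le> u" "u \<le> 1"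
    using that by (intro power_mono) auto
  ultimately show "0 \<le> smooth_step u" "smooth_step u \<le> 1"
    by (cases u rule: smooth_step_cases; simp add: power2_eq_square)+
qed

lemma smooth_step'_bounds: "0 \<le> smooth_step' u" "smooth_step' u \<le> 2"
  by (cases u rule: smooth_step_cases; simp)+

lemma smooth_step'_ge_one: "1/4 \<le> u \<Longrightarrow> u \<le> 3/4 \<Longrightarrow> 1 \<le> smooth_step' u"
  by (cases u rule: smooth_step_cases) auto

definition plateau :: "real \<Rightarrow> real" where
  "plateau s = smooth_step (s + 2) * smooth_step (2 - s)"

definition plateau' :: "real \<Rightarrow> real" where
  "plateau' s = smooth_step' (s + 2) * smooth_step (2 - s) - smooth_step (s + 2) * smooth_step' (2 - s)"

lemma has_real_derivative_plateau [derivative_intros]: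
  "(f has_real_derivative f') (at x within S) \<Longrightarrow>
    ((\<lambda>x. plateau (f x)) has_real_derivative plateau' (f x) * f') (at x within S)"
  unfolding plateau_def plateau'_def
  by (auto intro!: derivative_eq_intros simp: algebra_simps)

lemma continuous_on_plateau': "continuous_on UNIV plateau'"
  unfolding plateau'_def
  by (intro continuous_intros continuous_on_compose2[OF continuous_on_smooth_step]
      continuous_on_compose2[OF continuous_on_smooth_step']) auto

lemma plateau_bounds: "0 \<le> plateau s" "plateau s \<le> 1"
  unfolding plateau_def using smooth_step_bounds by (auto intro: mult_le_one)

lemma plateau_inner: "\<bar>s\<bar> \<le> 1 \<Longrightarrow> plateau s = 1 \<and> plateau' s = 0"
  by (cases "s + 2" rule: smooth_step_cases; cases "2 - s" rule: smooth_step_cases)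
     (auto simp: plateau_def plateau'_def)

lemma plateau_outer: "2 \<le> \<bar>s\<bar> \<Longrightarrow> plateau s = 0 \<and> plateau' s = 0"
  by (cases "s + 2" rule: smooth_step_cases; cases "2 - s" rule: smooth_step_cases)
     (auto simp: plateau_def plateau'_def)

lemma abs_plateau'_le: "\<bar>plateau' s\<bar> \<le> 4"
proof -
  have "\<bar>smooth_step' a * smooth_step b\<bar> \<le> 2" for a b
    using smooth_step_bounds[of b] smooth_step'_bounds[of a]
    by (simp add: abs_mult) (metis mult_mono mult_1_right zero_le_numeral order_trans)
  from this[of "s + 2" "2 - s"] this[of "2 - s" "s + 2"] show ?thesis
    unfolding plateau'_def by (simp add: mult.commute)
qed

lemma plateau'_nonpos: "0 \<le> s \<Longrightarrow> plateau' s \<le> 0"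
  using smooth_step'_bounds[of "2 - s"]
  by (cases "s + 2" rule: smooth_step_cases) (auto simp: plateau'_def)

lemma plateau'_le_neg_one: "5/4 \<le> s \<Longrightarrow> s \<le> 7/4 \<Longrightarrow> plateau' s \<le> -1"
  using smooth_step'_ge_one[of "2 - s"]
  by (cases "s + 2" rule: smooth_step_cases) (auto simp: plateau'_def)

lemma norm_le_abs_components: "norm (x::real^2) \<le> \<bar>x$1\<bar> + \<bar>x$2\<bar>"
  using norm_le_l1_cart[of x] by (simp add: UNIV_2)

lemma abs_linear_combination_le: "\<bar>a * v$1 + b * v$2\<bar> \<le> (\<bar>a\<bar> + \<bar>b\<bar>) * norm (v::real^2)"
proof -
  have "\<bar>a * v$1 + b * v$2\<bar> \<le> \<bar>a\<bar> * \<bar>v$1\<bar> + \<bar>b\<bar> * \<bar>v$2\<bar>"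
    by (metis abs_mult abs_triangle_ineq)
  also have "\<dots> \<le> \<bar>a\<bar> * norm v + \<bar>b\<bar> * norm v"
    by (intro add_mono mult_left_mono component_le_norm_cart) auto
  finally show ?thesis by (simp add: algebra_simps)
qed

lemma mem_cbox_vector2:
  "(x::real^2) \<in> cbox (vector [a1, a2]) (vector [b1, b2]) \<longleftrightarrow>
    a1 \<le> x$1 \<and> x$1 \<le> b1 \<and> a2 \<le> x$2 \<and> x$2 \<le> b2"
  by (auto simp: mem_box_cart forall_2)

lemma measure_cbox_vector2:
  assumes "a1 \<le> b1" "a2 \<le> b2"
  shows "measure lebesgue (cbox (vector [a1, a2]) (vector [b1, b2]) :: (real^2) set) = (b1 - a1) * (b2 - a2)"
proof -
  have "cbox (vector [a1, a2]) (vector [b1, b2]) \<noteq> ({} :: (real^2) set)"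
    using assms by (simp add: interval_ne_empty_cart forall_2)
  from content_cbox_cart[OF this] show ?thesis by (simp add: UNIV_2)
qed

lemma linear_vec2_expand:
  assumes "linear (f :: real^2 \<Rightarrow> real)"
  shows "f v = v$1 * f (axis 1 1) + v$2 * f (axis 2 1)"
proof -
  have "v = v$1 *\<^sub>R axis 1 1 + v$2 *\<^sub>R axis 2 1"
    by (simp add: vec_eq_iff forall_2 axis_def)
  then have "f v = f (v$1 *\<^sub>R axis 1 1 + v$2 *\<^sub>R axis 2 1)" by simp
  then show ?thesis using assms by (simp add: linear_add linear_scale)
qed

lemma C1c_tensor_product:
  fixes f g f' g' :: "real \<Rightarrow> real"
  assumes f: "\<And>t. (f has_real_derivative f' t) (at t)" "continuous_on UNIV f'"
    and g: "\<And>t. (g has_real_derivative g' t) (at t)" "continuous_on UNIV g'"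
    and f_supp: "\<And>t. a \<le> \<bar>t\<bar> \<Longrightarrow> f t = 0" and g_supp: "\<And>t. b \<le> \<bar>t\<bar> \<Longrightarrow> g t = 0"
  shows "C1c (\<lambda>x. f (x$1) * g (x$2)) (\<lambda>x v. f' (x$1) * g (x$2) * v$1 + f (x$1) * g' (x$2) * v$2)"
  unfolding C1c_def
proof (intro conjI allI)
  fix x :: "real^2"
  have "((\<lambda>x. f (x$1)) has_derivative (\<lambda>v. v$1 * f' (x$1))) (at x)"
    "((\<lambda>x. g (x$2)) has_derivative (\<lambda>v. v$2 * g' (x$2))) (at x)"
    by (intro DERIV_compose_FDERIV f g bounded_linear_imp_has_derivative bounded_linear_vec_nth)+
  from has_derivative_mult[OF this]
  show "((\<lambda>x. f (x$1) * g (x$2)) has_derivative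
      (\<lambda>v. f' (x$1) * g (x$2) * v$1 + f (x$1) * g' (x$2) * v$2)) (at x)"
    by (simp add: algebra_simps)
next
  fix v :: "real^2"
  have cont: "continuous_on UNIV f" "continuous_on UNIV g"
    using f(1) g(1) by (meson DERIV_continuous continuous_at_imp_continuous_on)+
  show "continuous_on UNIV (\<lambda>x. f' (x$1) * g (x$2) * v$1 + f (x$1) * g' (x$2) * v$2)"
    by (intro continuous_intros continuous_on_compose2[OF f(2)] continuous_on_compose2[OF g(2)]
        continuous_on_compose2[OF cont(1)] continuous_on_compose2[OF cont(2)]) auto
next
  have "norm x \<le> a + b" if "f (x$1) * g (x$2) \<noteq> 0" for x :: "real^2"
  proof -
    have "\<bar>x$1\<bar> < a" "\<bar>x$2\<bar> < b"
      using that f_supp[of "x$1"] g_supp[of "x$2"] by (auto simp: not_le[symmetric])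
    then show ?thesis using norm_le_abs_components[of x] by linarith
  qed
  then have "bounded {x::real^2. f (x$1) * g (x$2) \<noteq> 0}"
    unfolding bounded_iff by blast
  then show "compact (closure {x::real^2. f (x$1) * g (x$2) \<noteq> 0})" by simp
qed

lemma C1c_mult_component2:
  assumes "C1c \<Phi> \<Phi>'"
  shows "C1c (\<lambda>x. x$2 * \<Phi> x) (\<lambda>x v. v$2 * \<Phi> x + x$2 * \<Phi>' x v)"
  unfolding C1c_def
proof (intro conjI allI)
  fix x :: "real^2"
  have "((\<lambda>x. x$2) has_derivative (\<lambda>v. v$2)) (at x)"
    by (intro bounded_linear_imp_has_derivative bounded_linear_vec_nth)
  from has_derivative_mult[OF this, of \<Phi> "\<Phi>' x"] assms
  show "((\<lambda>x. x$2 * \<Phi> x) has_derivative (\<lambda>v. v$2 * \<Phi> x + x$2 * \<Phi>' x v)) (at x)"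
    unfolding C1c_def by (simp add: algebra_simps)
next
  fix v :: "real^2"
  have "continuous_on UNIV \<Phi>"
    using assms unfolding C1c_def
    by (meson has_derivative_continuous continuous_at_imp_continuous_on)
  with assms show "continuous_on UNIV (\<lambda>x. v$2 * \<Phi> x + x$2 * \<Phi>' x v)"
    unfolding C1c_def by (intro continuous_intros) auto
next
  have "closure {x. x$2 * \<Phi> x \<noteq> 0} \<subseteq> closure {x. \<Phi> x \<noteq> 0}"
    by (intro closure_mono) auto
  moreover have "bounded (closure {x. \<Phi> x \<noteq> 0})"
    using assms unfolding C1c_def by (simp add: compact_imp_bounded)
  ultimately have "bounded (closure {x. x$2 * \<Phi> x \<noteq> 0})"
    by (rule bounded_subset[rotated])
  from bounded_subset[OF this closure_subset]
  show "compact (closure {x::real^2. x$2 * \<Phi> x \<noteq> 0})" by (simp add: compact_closure)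
qed

definition bump :: "real \<Rightarrow> real \<Rightarrow> real^2 \<Rightarrow> real" where
  "bump l H x = plateau (x$1 / l) * plateau (x$2 / H)"

definition bump_dx1 :: "real \<Rightarrow> real \<Rightarrow> real^2 \<Rightarrow> real" where
  "bump_dx1 l H x = plateau' (x$1 / l) / l * plateau (x$2 / H)"

definition bump_dx2 :: "real \<Rightarrow> real \<Rightarrow> real^2 \<Rightarrow> real" where
  "bump_dx2 l H x = plateau (x$1 / l) * (plateau' (x$2 / H) / H)"

lemma C1c_bump:
  assumes "0 < l" "0 < H"
  shows "C1c (bump l H) (\<lambda>x v. bump_dx1 l H x * v$1 + bump_dx2 l H x * v$2)"
proof -
  have "((\<lambda>t. plateau (t / c)) has_real_derivative plateau' (t / c) / c) (at t)" if "0 < c" for c t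
    using that by (auto intro!: derivative_eq_intros)
  moreover have "continuous_on UNIV (\<lambda>t. plateau' (t / c) / c)" if "0 < c" for c
    using that by (intro continuous_intros continuous_on_compose2[OF continuous_on_plateau']) auto
  moreover have "plateau (t / c) = 0" if "0 < c" "2 * c \<le> \<bar>t\<bar>" for c t
    using plateau_outer[of "t / c"] that by (simp add: abs_div le_divide_eq)
  ultimately show ?thesis
    unfolding bump_def[abs_def] bump_dx1_def bump_dx2_def using assms
    by (intro C1c_tensor_product) (auto simp: algebra_simps)
qed

lemma bump_inner:
  assumes "0 < l" "0 < H" "\<bar>x$1\<bar> \<le> l" "\<bar>x$2\<bar> \<le> H"
  shows "bump l H x = 1" "bump_dx1 l H x = 0" "bump_dx2 l H x = 0"
  using plateau_inner[of "x$1 / l"] plateau_inner[of "x$2 / H"] assms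
  by (simp_all add: bump_def bump_dx1_def bump_dx2_def abs_div divide_le_eq)

lemma bump_dx_outer:
  assumes "0 < l" "0 < H" "2 * l \<le> \<bar>x$1\<bar> \<or> 2 * H \<le> \<bar>x$2\<bar>"
  shows "bump_dx1 l H x = 0" "bump_dx2 l H x = 0"
  using plateau_outer[of "x$1 / l"] plateau_outer[of "x$2 / H"] assms
  by (auto simp: bump_dx1_def bump_dx2_def abs_div le_divide_eq)

lemma bump_dx2_inner: "0 < H \<Longrightarrow> \<bar>x$2\<bar> \<le> H \<Longrightarrow> bump_dx2 l H x = 0"
  using plateau_inner[of "x$2 / H"] by (simp add: bump_dx2_def abs_div divide_le_eq)

lemma continuous_on_bump_dx:
  assumes "0 < l" "0 < H"
  shows "continuous_on UNIV (bump_dx1 l H)" "continuous_on UNIV (bump_dx2 l H)"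
proof -
  have "continuous_on UNIV (\<lambda>x. bump_dx1 l H x * v$1 + bump_dx2 l H x * v$2)" for v :: "real^2"
    using C1c_bump[OF assms] unfolding C1c_def by blast
  from this[of "axis 1 1"] this[of "axis 2 1"]
  show "continuous_on UNIV (bump_dx1 l H)" "continuous_on UNIV (bump_dx2 l H)"
    by (simp_all add: axis_def)
qed

lemma abs_bump_dx1_le: "0 < l \<Longrightarrow> \<bar>bump_dx1 l H x\<bar> \<le> 4 / l"
proof -
  assume "0 < l"
  have "\<bar>plateau' (x$1 / l)\<bar> * plateau (x$2 / H) \<le> 4 * 1"
    using abs_plateau'_le plateau_bounds by (intro mult_mono) auto
  with \<open>0 < l\<close> show ?thesis
    by (simp add: bump_dx1_def abs_mult plateau_bounds divide_right_mono)
qed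

lemma abs_bump_dx2_le: "0 < H \<Longrightarrow> \<bar>bump_dx2 l H x\<bar> \<le> 4 / H"
proof -
  assume "0 < H"
  have "plateau (x$1 / l) * \<bar>plateau' (x$2 / H)\<bar> \<le> 1 * 4"
    using abs_plateau'_le plateau_bounds by (intro mult_mono) auto
  with \<open>0 < H\<close> show ?thesis
    by (simp add: bump_dx2_def abs_mult plateau_bounds divide_right_mono)
qed

lemma C1c_eq_component2_on_bounded:
  assumes "bounded C"
  obtains \<Phi> \<Phi>' where "C1c \<Phi> \<Phi>'" "\<And>x v. x \<in> C \<Longrightarrow> \<Phi>' x v = v$2"
proof -
  obtain B where B: "0 < B" "\<And>x. x \<in> C \<Longrightarrow> norm x \<le> B"
    using assms bounded_pos by blast
  have in_box: "\<bar>x$i\<bar> \<le> B" if "x \<in> C" for x i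
    using B(2)[OF that] component_le_norm_cart[of x i] by linarith
  show ?thesis
  proof (rule that[OF C1c_mult_component2[OF C1c_bump[OF B(1) B(1)]]])
    show "v$2 * bump B B x + x$2 * (bump_dx1 B B x * v$1 + bump_dx2 B B x * v$2) = v$2"
      if "x \<in> C" for x v
      using bump_inner[OF B(1) B(1) in_box[OF that] in_box[OF that]] by simp
  qed
qed

section \<open>The duality bound for the energy\<close>

lemma mult_le_amgm:
  fixes a b l :: real
  assumes "0 < l"
  shows "a * b \<le> (l * a\<^sup>2 + b\<^sup>2 / l) / 2"
proof -
  have "0 \<le> (l * a - b)\<^sup>2 / l" using assms by simp
  also have "\<dots> = l * a\<^sup>2 - 2 * a * b + b\<^sup>2 / l"
    using assms by (simp add: field_simps power2_eq_square)
  finally show ?thesis by simp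
qed

text \<open>Optimising over l replaces the Cauchy-Schwarz inequality in L^2.\<close>

lemma sq_le_mult_if_le_amgm:
  fixes a b c :: real
  assumes "0 \<le> b" "0 \<le> c" and amgm: "\<And>l. 0 < l \<Longrightarrow> \<bar>a\<bar> \<le> (l * b + c / l) / 2"
  shows "a\<^sup>2 \<le> b * c"
proof (cases "a = 0")
  case False
  then have a: "0 < \<bar>a\<bar>" by simp
  have "0 < b"
  proof (rule ccontr)
    assume "\<not> 0 < b"
    then have "b = 0" using assms(1) by simp
    then have "\<bar>a\<bar> \<le> c * \<bar>a\<bar> / (2 * (c + 1))"
      using amgm[of "(c + 1) / \<bar>a\<bar>"] a assms(2) by (simp add: field_simps)
    also have "\<dots> < \<bar>a\<bar>"
      using a assms(2) by (simp add: field_simps add_nonneg_pos)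
    finally show False by simp
  qed
  then have "\<bar>a\<bar> \<le> (\<bar>a\<bar> + c * b / \<bar>a\<bar>) / 2"
    using amgm[of "\<bar>a\<bar> / b"] a by (simp add: field_simps)
  then have "\<bar>a\<bar> * \<bar>a\<bar> \<le> b * c" using a by (simp add: field_simps)
  then show ?thesis by (simp add: power2_eq_square)
qed (use assms in simp)

lemma measurable_C1c_deriv_apply:
  assumes "C1c \<Phi> \<Phi>'" and "\<Omega> \<in> sets lebesgue" and "G \<in> borel_measurable (lebesgue_on \<Omega>)"
  shows "(\<lambda>x. \<Phi>' x (G x)) \<in> borel_measurable (lebesgue_on \<Omega>)"
proof -
  have lin: "linear (\<Phi>' x)" for x
    using assms(1) unfolding C1c_def by (meson has_derivative_linear)
  have "(\<lambda>x. \<Phi>' x v) \<in> borel_measurable (lebesgue_on \<Omega>)" for v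
    using assms(1,2) unfolding C1c_def
    by (blast intro: continuous_imp_measurable_on_sets_lebesgue continuous_on_subset)
  moreover have "(\<lambda>x. G x $ i) \<in> borel_measurable (lebesgue_on \<Omega>)" for i
    using measurable_compose[OF assms(3) borel_measurable_nth] by (simp add: o_def)
  ultimately have "(\<lambda>x. G x $ 1 * \<Phi>' x (axis 1 1) + G x $ 2 * \<Phi>' x (axis 2 1))
      \<in> borel_measurable (lebesgue_on \<Omega>)"
    by (intro borel_measurable_add borel_measurable_times)
  then show ?thesis by (subst linear_vec2_expand[OF lin])
qed

lemma energy_nonneg: "0 \<le> energy \<Omega> G"
  unfolding energy_def by (auto intro: integral_nonneg_AE)

lemma flux_sq_le_energy:
  fixes C S0 :: "(real^2) set" and \<epsilon> :: real
  defines "\<Omega> \<equiv> Omega_eps C S0 \<epsilon>"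
  assumes sol: "weak_neumann_sol C S0 \<epsilon> U G" and \<Phi>: "C1c \<Phi> \<Phi>'"
    and \<Omega>_meas: "\<Omega> \<in> sets lebesgue"
    and k: "\<And>x v. x \<in> \<Omega> \<Longrightarrow> \<bar>\<Phi>' x v\<bar> \<le> k x * norm v"
    and k_int: "integrable (lebesgue_on \<Omega>) (\<lambda>x. (k x)\<^sup>2)"
  shows "(integral\<^sup>L (lebesgue_on (S_eps S0 \<epsilon> \<inter> {x. x$1 < 0})) (\<lambda>x. \<Phi>' x e2))\<^sup>2
    \<le> integral\<^sup>L (lebesgue_on \<Omega>) (\<lambda>x. (k x)\<^sup>2) * energy \<Omega> G"
proof -
  have "H1_weak_grad \<Omega> U G"
    and flux: "integral\<^sup>L (lebesgue_on \<Omega>) (\<lambda>x. \<Phi>' x (G x))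
      = - integral\<^sup>L (lebesgue_on (S_eps S0 \<epsilon> \<inter> {x. x$1 < 0})) (\<lambda>x. \<Phi>' x e2)"
    using sol \<Phi> unfolding weak_neumann_sol_def \<Omega>_def by auto
  then have G_meas: "G \<in> borel_measurable (lebesgue_on \<Omega>)"
    and G_int: "integrable (lebesgue_on \<Omega>) (\<lambda>x. (norm (G x))\<^sup>2)"
    unfolding H1_weak_grad_def L2_on_def by auto
  have bound: "\<bar>\<Phi>' x (G x)\<bar> \<le> (l * (k x)\<^sup>2 + (norm (G x))\<^sup>2 / l) / 2"
    if "x \<in> \<Omega>" "0 < l" for x l
    using k[OF that(1), of "G x"] mult_le_amgm[OF that(2), of "k x" "norm (G x)"] by linarith
  have int: "integrable (lebesgue_on \<Omega>) (\<lambda>x. \<Phi>' x (G x))"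
  proof (rule Bochner_Integration.integrable_bound)
    show "integrable (lebesgue_on \<Omega>) (\<lambda>x. (1 * (k x)\<^sup>2 + (norm (G x))\<^sup>2 / 1) / 2)"
      using k_int G_int by auto
    show "AE x in lebesgue_on \<Omega>. norm (\<Phi>' x (G x)) \<le> norm ((1 * (k x)\<^sup>2 + (norm (G x))\<^sup>2 / 1) / 2)"
      using bound[of _ 1] by (intro AE_I2) (auto simp: space_restrict_space)
  qed (rule measurable_C1c_deriv_apply[OF \<Phi> \<Omega>_meas G_meas])
  show ?thesis
  proof (rule sq_le_mult_if_le_amgm)
    show "0 \<le> integral\<^sup>L (lebesgue_on \<Omega>) (\<lambda>x. (k x)\<^sup>2)" "0 \<le> energy \<Omega> G"
      by (auto intro: integral_nonneg_AE energy_nonneg)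
    fix l :: real assume "0 < l"
    have "\<bar>integral\<^sup>L (lebesgue_on \<Omega>) (\<lambda>x. \<Phi>' x (G x))\<bar>
        \<le> integral\<^sup>L (lebesgue_on \<Omega>) (\<lambda>x. \<bar>\<Phi>' x (G x)\<bar>)"
      by (rule integral_abs_bound)
    also have "\<dots> \<le> integral\<^sup>L (lebesgue_on \<Omega>) (\<lambda>x. (l * (k x)\<^sup>2 + (norm (G x))\<^sup>2 / l) / 2)"
      using k_int G_int int bound \<open>0 < l\<close>
      by (intro integral_mono) (auto simp: space_restrict_space)
    also have "\<dots> = (l * integral\<^sup>L (lebesgue_on \<Omega>) (\<lambda>x. (k x)\<^sup>2) + energy \<Omega> G / l) / 2"
      unfolding energy_def using k_int G_int by simp
    finally show "\<bar>integral\<^sup>L (lebesgue_on (S_eps S0 \<epsilon> \<inter> {x. x$1 < 0})) (\<lambda>x. \<Phi>' x e2)\<bar>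
        \<le> (l * integral\<^sup>L (lebesgue_on \<Omega>) (\<lambda>x. (k x)\<^sup>2) + energy \<Omega> G / l) / 2"
      unfolding flux by simp
  qed
qed

lemma integrable_lebesgue_on_bounded_continuous:
  fixes f :: "'a::euclidean_space \<Rightarrow> real"
  assumes "S \<in> lmeasurable" "continuous_on S f" "\<And>x. x \<in> S \<Longrightarrow> \<bar>f x\<bar> \<le> B"
  shows "integrable (lebesgue_on S) f"
proof -
  interpret finite_measure "lebesgue_on S" using assms(1) by (rule finite_measure_lebesgue_on)
  show ?thesis
  proof (rule integrable_const_bound[where B=B])
    show "AE x in lebesgue_on S. norm (f x) \<le> B"
      using assms(3) by (intro AE_I2) (simp add: space_restrict_space)
    show "f \<in> borel_measurable (lebesgue_on S)"
      using assms(1,2) by (intro continuous_imp_measurable_on_sets_lebesgue) auto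
  qed
qed

lemma integral_indicator_lebesgue_on:
  fixes S A :: "'a::euclidean_space set"
  assumes "S \<in> lmeasurable" "A \<in> sets lebesgue"
  shows "integrable (lebesgue_on S) (\<lambda>x. c * indicator A x)"
    and "integral\<^sup>L (lebesgue_on S) (\<lambda>x. c * indicator A x) = c * measure lebesgue (A \<inter> S)"
proof -
  interpret finite_measure "lebesgue_on S" using assms(1) by (rule finite_measure_lebesgue_on)
  show "integrable (lebesgue_on S) (\<lambda>x. c * indicator A x)"
    using assms(2) by (intro integrable_const_bound[where B="\<bar>c\<bar>"] AE_I2
        borel_measurable_times borel_measurable_const measurable_restrict_space1
        borel_measurable_indicator) (auto simp: indicator_def)
  have "measure (lebesgue_on S) (A \<inter> S) = measure lebesgue (A \<inter> S)"
    using assms by (intro measure_restrict_space) auto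
  then show "integral\<^sup>L (lebesgue_on S) (\<lambda>x. c * indicator A x) = c * measure lebesgue (A \<inter> S)"
    by (simp add: space_restrict_space)
qed

lemma integral_lebesgue_on_le_indicator:
  fixes f :: "'a::euclidean_space \<Rightarrow> real"
  assumes "S \<in> lmeasurable" "A \<in> lmeasurable" "0 \<le> c" "integrable (lebesgue_on S) f"
    and "\<And>x. x \<in> S \<Longrightarrow> f x \<le> c * indicator A x"
  shows "integral\<^sup>L (lebesgue_on S) f \<le> c * measure lebesgue A"
proof -
  have "integral\<^sup>L (lebesgue_on S) f \<le> integral\<^sup>L (lebesgue_on S) (\<lambda>x. c * indicator A x)"
    using assms integral_indicator_lebesgue_on(1)[OF assms(1)]
    by (intro integral_mono) (auto simp: space_restrict_space)
  also have "\<dots> = c * measure lebesgue (A \<inter> S)"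
    using assms by (intro integral_indicator_lebesgue_on) auto
  also have "\<dots> \<le> c * measure lebesgue A"
    using assms by (intro mult_left_mono measure_mono_fmeasurable) auto
  finally show ?thesis .
qed

lemma indicator_le_integral_lebesgue_on:
  fixes f :: "'a::euclidean_space \<Rightarrow> real"
  assumes "S \<in> lmeasurable" "A \<in> sets lebesgue" "A \<subseteq> S" "integrable (lebesgue_on S) f"
    and "\<And>x. x \<in> S \<Longrightarrow> c * indicator A x \<le> f x"
  shows "c * measure lebesgue A \<le> integral\<^sup>L (lebesgue_on S) f"
proof -
  have "A \<inter> S = A" using assms(3) by blast
  with integral_indicator_lebesgue_on(2)[OF assms(1,2), of c]
  have "c * measure lebesgue A = integral\<^sup>L (lebesgue_on S) (\<lambda>x. c * indicator A x)"
    by (simp only:)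
  also have "\<dots> \<le> integral\<^sup>L (lebesgue_on S) f"
    using assms integral_indicator_lebesgue_on(1)[OF assms(1,2)]
    by (intro integral_mono) (auto simp: space_restrict_space)
  finally show ?thesis .
qed

section \<open>Lower bounds for the energy\<close>

lemma e2_nth [simp]: "e2$1 = 0" "e2$2 = 1"
  by (simp_all add: e2_def axis_def)

lemma compact_S_eps: "compact S0 \<Longrightarrow> compact (S_eps S0 \<epsilon>)"
  unfolding S_eps_def by (intro compact_continuous_image continuous_intros)

lemma lmeasurable_Omega_eps:
  assumes "bounded C" "open C" "compact S0"
  shows "Omega_eps C S0 \<epsilon> \<in> lmeasurable"
proof -
  have "open (Omega_eps C S0 \<epsilon>)"
    unfolding Omega_eps_def using assms compact_S_eps
    by (intro open_Int open_Diff compact_imp_closed open_halfspace_component_lt_cart) auto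
  moreover have "bounded (Omega_eps C S0 \<epsilon>)"
    using assms(1) by (rule bounded_subset) (auto simp: Omega_eps_def)
  ultimately show ?thesis by (simp add: lmeasurable_open)
qed

lemma lmeasurable_half_solid:
  assumes "compact S0"
  shows "S_eps S0 \<epsilon> \<inter> {x. x$1 < 0} \<in> lmeasurable"
proof (rule fmeasurable_Int_fmeasurable)
  show "S_eps S0 \<epsilon> \<in> lmeasurable" by (intro lmeasurable_compact compact_S_eps assms)
  show "{x::real^2. x$1 < 0} \<in> sets lebesgue"
    by (metis borel_open open_halfspace_component_lt_cart sets_completionI_sets sets_lborel)
qed

lemma measure_half_solid:
  "measure lebesgue (S_eps S0 \<epsilon> \<inter> {x. x$1 < 0}) = measure lebesgue (S0 \<inter> {x::real^2. x$1 < 0})"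
proof -
  have "S_eps S0 \<epsilon> \<inter> {x. x$1 < 0} = (+) (\<epsilon> *\<^sub>R e2) ` (S0 \<inter> {x. x$1 < 0})"
    unfolding S_eps_def by (auto simp: image_iff add.commute)
  then show ?thesis by (simp add: measure_translation)
qed

locale obstacle =
  fixes C S0 :: "(real^2) set" and \<epsilon>s :: real
  assumes bounded_C: "bounded C" and open_C: "open C" and compact_S0: "compact S0"
    and eps_pos: "0 < \<epsilon>s" and S_eps_subset: "\<And>\<epsilon>. \<epsilon> \<in> {0<..\<epsilon>s} \<Longrightarrow> S_eps S0 \<epsilon> \<subseteq> C"
begin

lemma measure_sq_le_energy:
  assumes "\<epsilon> \<in> {0<..\<epsilon>s}" and sol: "weak_neumann_sol C S0 \<epsilon> U G"
  shows "(measure lebesgue (S0 \<inter> {x. x$1 < 0}))\<^sup>2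
    \<le> measure lebesgue C * energy (Omega_eps C S0 \<epsilon>) G"
proof -
  define \<Omega> where "\<Omega> = Omega_eps C S0 \<epsilon>"
  define Sm where "Sm = S_eps S0 \<epsilon> \<inter> {x. x$1 < 0}"
  obtain \<Phi> \<Phi>' where \<Phi>: "C1c \<Phi> \<Phi>'" and \<Phi>'_on_C: "\<And>x v. x \<in> C \<Longrightarrow> \<Phi>' x v = v$2"
    using C1c_eq_component2_on_bounded[OF bounded_C] by blast
  have subsets: "\<Omega> \<subseteq> C" "Sm \<subseteq> C"
    using S_eps_subset[OF assms(1)] by (auto simp: \<Omega>_def Sm_def Omega_eps_def)
  have meas: "\<Omega> \<in> lmeasurable" "Sm \<in> lmeasurable" "C \<in> lmeasurable"
    unfolding \<Omega>_def Sm_def using bounded_C open_C compact_S0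
    by (auto intro: lmeasurable_Omega_eps lmeasurable_half_solid lmeasurable_open)
  have "measure lebesgue (S0 \<inter> {x. x$1 < 0}) = 1 * measure lebesgue Sm"
    by (simp add: Sm_def measure_half_solid)
  also have "\<dots> \<le> integral\<^sup>L (lebesgue_on Sm) (\<lambda>x. \<Phi>' x e2)"
  proof (rule indicator_le_integral_lebesgue_on[OF meas(2) fmeasurableD[OF meas(2)] order_refl])
    show "integrable (lebesgue_on Sm) (\<lambda>x. \<Phi>' x e2)"
      using \<Phi> meas(2) subsets \<Phi>'_on_C unfolding C1c_def
      by (intro integrable_lebesgue_on_bounded_continuous[where B=1]) (auto intro: continuous_on_subset)
  qed (use subsets \<Phi>'_on_C in auto)
  finally have "(measure lebesgue (S0 \<inter> {x. x$1 < 0}))\<^sup>2 \<le> (integral\<^sup>L (lebesgue_on Sm) (\<lambda>x. \<Phi>' x e2))\<^sup>2"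
    by (intro power_mono) auto
  also have "\<dots> \<le> integral\<^sup>L (lebesgue_on \<Omega>) (\<lambda>x. 1\<^sup>2) * energy \<Omega> G"
    unfolding Sm_def \<Omega>_def
  proof (rule flux_sq_le_energy[OF sol \<Phi>])
    show "\<bar>\<Phi>' x v\<bar> \<le> 1 * norm v" if "x \<in> Omega_eps C S0 \<epsilon>" for x v
      using that subsets \<Phi>'_on_C component_le_norm_cart[of v 2] by (auto simp: \<Omega>_def)
  qed (use meas(1) in \<open>auto simp: \<Omega>_def finite_measure.integrable_const finite_measure_lebesgue_on\<close>)
  also have "\<dots> \<le> measure lebesgue C * energy \<Omega> G"
  proof (rule mult_right_mono)
    show "integral\<^sup>L (lebesgue_on \<Omega>) (\<lambda>x. 1\<^sup>2) \<le> measure lebesgue C"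
      using integral_lebesgue_on_le_indicator[OF meas(1) meas(3), of 1 "\<lambda>x. 1\<^sup>2"] subsets meas(1)
      by (auto simp: finite_measure.integrable_const finite_measure_lebesgue_on subset_iff
          simp del: integral_const)
    show "0 \<le> energy \<Omega> G" by (rule energy_nonneg)
  qed
  finally show ?thesis unfolding \<Omega>_def .
qed

lemma energy_ge_powr_if_local:
  assumes m_pos: "0 < measure lebesgue (S0 \<inter> {x. x$1 < 0})"
    and "0 < \<epsilon>1" "0 < b" "p \<le> 0"
    and local: "\<And>\<epsilon> U G. 0 < \<epsilon> \<Longrightarrow> \<epsilon> \<le> \<epsilon>1 \<Longrightarrow> \<epsilon> \<le> \<epsilon>s \<Longrightarrow> weak_neumann_sol C S0 \<epsilon> U G \<Longrightarrow>
      b * \<epsilon> powr p \<le> energy (Omega_eps C S0 \<epsilon>) G"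
  shows "\<exists>K>0. \<forall>\<epsilon>\<in>{0<..\<epsilon>s}. \<forall>U G. weak_neumann_sol C S0 \<epsilon> U G \<longrightarrow>
    energy (Omega_eps C S0 \<epsilon>) G \<ge> K * \<epsilon> powr p"
proof -
  define m where "m = measure lebesgue (S0 \<inter> {x. x$1 < 0})"
  define c where "c = m\<^sup>2 / measure lebesgue C"
  have "m = measure lebesgue (S_eps S0 \<epsilon>s \<inter> {x. x$1 < 0})"
    by (simp add: m_def measure_half_solid)
  also have "\<dots> \<le> measure lebesgue C"
    using S_eps_subset[of \<epsilon>s] eps_pos bounded_C open_C compact_S0
    by (intro measure_mono_fmeasurable fmeasurableD lmeasurable_half_solid lmeasurable_open) auto
  finally have C_pos: "0 < measure lebesgue C" using m_pos by (simp add: m_def)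
  then have "0 < c" using m_pos by (simp add: c_def m_def)
  have global: "c \<le> energy (Omega_eps C S0 \<epsilon>) G"
    if "\<epsilon> \<in> {0<..\<epsilon>s}" "weak_neumann_sol C S0 \<epsilon> U G" for \<epsilon> U G
    using measure_sq_le_energy[OF that] C_pos by (simp add: c_def m_def divide_le_eq mult.commute)
  show ?thesis
  proof (intro exI[of _ "min b (c / \<epsilon>1 powr p)"] conjI ballI allI impI)
    show "0 < min b (c / \<epsilon>1 powr p)" using \<open>0 < c\<close> assms by simp
    fix \<epsilon> U G assume \<epsilon>: "\<epsilon> \<in> {0<..\<epsilon>s}" and sol: "weak_neumann_sol C S0 \<epsilon> U G"
    show "min b (c / \<epsilon>1 powr p) * \<epsilon> powr p \<le> energy (Omega_eps C S0 \<epsilon>) G"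
    proof (cases "\<epsilon> \<le> \<epsilon>1")
      case True
      have "min b (c / \<epsilon>1 powr p) * \<epsilon> powr p \<le> b * \<epsilon> powr p" by (intro mult_right_mono) auto
      also have "\<dots> \<le> energy (Omega_eps C S0 \<epsilon>) G" using local True \<epsilon> sol by auto
      finally show ?thesis .
    next
      case False
      have "\<epsilon> powr p \<le> \<epsilon>1 powr p" using False assms by (intro powr_mono2') auto
      then have "min b (c / \<epsilon>1 powr p) * \<epsilon> powr p \<le> c / \<epsilon>1 powr p * \<epsilon>1 powr p"
        using \<open>0 < c\<close> assms by (intro mult_mono) auto
      also have "\<dots> = c" using assms by simp
      finally show ?thesis using global[OF \<epsilon> sol] by linarith
    qed
  qed
qed

end

lemma cusp_height_le:
  fixes \<kappa> \<alpha> \<epsilon> t :: real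
  assumes "0 \<le> \<kappa>" "0 < 1 + \<alpha>" "0 < \<epsilon>" "\<bar>t\<bar> \<le> 2 * \<epsilon> powr (1 / (1 + \<alpha>))"
  shows "\<kappa> * \<bar>t\<bar> powr (1 + \<alpha>) \<le> \<kappa> * 2 powr (1 + \<alpha>) * \<epsilon>"
proof -
  have "\<bar>t\<bar> powr (1 + \<alpha>) \<le> (2 * \<epsilon> powr (1 / (1 + \<alpha>))) powr (1 + \<alpha>)"
    using assms by (intro powr_mono2) auto
  also have "\<dots> = 2 powr (1 + \<alpha>) * \<epsilon>"
    using assms by (simp add: powr_mult powr_powr)
  finally show ?thesis using assms(1) by (simp add: mult_left_mono mult.assoc)
qed

locale obstacle_near_origin = obstacle +
  fixes r :: real and f :: "real \<Rightarrow> real"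
  assumes r_pos: "0 < r"
    and C_near_origin: "\<And>x. x \<in> ball 0 r \<Longrightarrow> x \<in> C \<longleftrightarrow> 0 < x$2"
    and fluid_near_origin: "\<And>\<epsilon> x. \<epsilon> \<in> {0<..\<epsilon>s} \<Longrightarrow> x \<in> ball 0 r \<Longrightarrow>
      x \<in> C - S_eps S0 \<epsilon> \<longleftrightarrow> 0 < x$2 \<and> x$2 < f (x$1) + \<epsilon>"
begin

definition admissible_scales :: "real \<Rightarrow> real \<Rightarrow> real \<Rightarrow> real \<Rightarrow> bool" where
  "admissible_scales \<epsilon> l H g \<longleftrightarrow> \<epsilon> \<in> {0<..\<epsilon>s} \<and> 0 < l \<and> 0 < g \<and> g \<le> H \<and> 2 * l + 2 * H \<le> r \<and>
    (\<forall>t. \<bar>t\<bar> \<le> 2 * l \<longrightarrow> f t + \<epsilon> \<le> g)"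

lemma admissible_scales_in_ball:
  fixes x :: "real^2"
  assumes "admissible_scales \<epsilon> l H g" "\<bar>x$1\<bar> < 2 * l" "\<bar>x$2\<bar> < 2 * H"
  shows "x \<in> ball 0 r"
  using assms norm_le_abs_components[of x] by (simp add: admissible_scales_def)

lemma fluid_in_box:
  assumes adm: "admissible_scales \<epsilon> l H g" and x: "x \<in> Omega_eps C S0 \<epsilon>"
    and "\<bar>x$1\<bar> < 2 * l" "\<bar>x$2\<bar> < 2 * H"
  shows "x \<in> cbox (vector [-2 * l, 0]) (vector [0, g])"
proof -
  have "x \<in> C - S_eps S0 \<epsilon>" "x$1 < 0" using x by (auto simp: Omega_eps_def)
  then have "0 < x$2" "x$2 < f (x$1) + \<epsilon>"
    using adm fluid_near_origin admissible_scales_in_ball[OF assms(1,3,4)]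
    by (auto simp: admissible_scales_def)
  moreover have "f (x$1) + \<epsilon> \<le> g" using adm assms(3) by (simp add: admissible_scales_def)
  ultimately show ?thesis using \<open>x$1 < 0\<close> assms(3) by (simp add: mem_cbox_vector2)
qed

lemma rectangle_subset_half_solid:
  assumes adm: "admissible_scales \<epsilon> l H g"
  shows "cbox (vector [-l, 5 * H / 4]) (vector [-l / 2, 7 * H / 4]) \<subseteq> S_eps S0 \<epsilon> \<inter> {x. x$1 < 0}"
proof
  fix x :: "real^2" assume "x \<in> cbox (vector [-l, 5 * H / 4]) (vector [-l / 2, 7 * H / 4])"
  then have x: "-l \<le> x$1" "x$1 \<le> -l / 2" "5 * H / 4 \<le> x$2" "x$2 \<le> 7 * H / 4"
    by (simp_all add: mem_cbox_vector2)
  have pos: "0 < l" "0 < H" "g \<le> H" and \<epsilon>: "\<epsilon> \<in> {0<..\<epsilon>s}"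
    using adm by (auto simp: admissible_scales_def)
  then have xr: "x \<in> ball 0 r" using x by (intro admissible_scales_in_ball[OF adm]) auto
  have "f (x$1) + \<epsilon> \<le> g" using adm x pos by (simp add: admissible_scales_def)
  then have "x \<in> C" "x \<notin> C - S_eps S0 \<epsilon>"
    using C_near_origin[OF xr] fluid_near_origin[OF \<epsilon> xr] x pos by auto
  then show "x \<in> S_eps S0 \<epsilon> \<inter> {x. x$1 < 0}" using x pos by auto
qed

lemma measure_half_S0_pos:
  assumes "admissible_scales \<epsilon> l H g"
  shows "0 < measure lebesgue (S0 \<inter> {x. x$1 < 0})"
proof -
  have pos: "0 < l" "0 < H" using assms by (auto simp: admissible_scales_def)
  then have "0 < measure lebesgue (cbox (vector [-l, 5 * H / 4]) (vector [-l / 2, 7 * H / 4]) :: (real^2) set)"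
    by (subst measure_cbox_vector2) auto
  also have "\<dots> \<le> measure lebesgue (S_eps S0 \<epsilon> \<inter> {x. x$1 < 0})"
    using rectangle_subset_half_solid[OF assms] lmeasurable_half_solid[OF compact_S0]
    by (intro measure_mono_fmeasurable) auto
  finally show ?thesis by (simp add: measure_half_solid)
qed

lemma bump_slope_sq_le:
  assumes adm: "admissible_scales \<epsilon> l H g" and x: "x \<in> Omega_eps C S0 \<epsilon>"
  shows "(\<bar>bump_dx1 l H x\<bar> + \<bar>bump_dx2 l H x\<bar>)\<^sup>2
    \<le> 16 / l\<^sup>2 * indicator (cbox (vector [-2 * l, 0]) (vector [0, g])) x"
proof -
  have pos: "0 < l" "0 < H" "g \<le> H" using adm by (auto simp: admissible_scales_def)
  show ?thesis
  proof (cases "\<bar>x$1\<bar> < 2 * l \<and> \<bar>x$2\<bar> < 2 * H")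
    case True
    with fluid_in_box[OF adm x] have box: "x \<in> cbox (vector [-2 * l, 0]) (vector [0, g])" by simp
    then have "bump_dx2 l H x = 0" using pos by (intro bump_dx2_inner) (auto simp: mem_cbox_vector2)
    moreover have "\<bar>bump_dx1 l H x\<bar>\<^sup>2 \<le> (4 / l)\<^sup>2"
      using abs_bump_dx1_le[OF pos(1)] by (intro power_mono) auto
    ultimately show ?thesis using box by (simp add: power_divide)
  next
    case False
    then show ?thesis using bump_dx_outer[OF pos(1,2)] by (auto simp: not_less)
  qed
qed

lemma indicator_le_neg_bump_dx2:
  assumes adm: "admissible_scales \<epsilon> l H g" and x: "x \<in> S_eps S0 \<epsilon> \<inter> {x. x$1 < 0}"
  shows "1 / H * indicator (cbox (vector [-l, 5 * H / 4]) (vector [-l / 2, 7 * H / 4])) x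
    \<le> - bump_dx2 l H x"
proof -
  have pos: "0 < l" "0 < H" and \<epsilon>: "\<epsilon> \<in> {0<..\<epsilon>s}" using adm by (auto simp: admissible_scales_def)
  show ?thesis
  proof (cases "x \<in> cbox (vector [-l, 5 * H / 4]) (vector [-l / 2, 7 * H / 4])")
    case True
    then have "plateau (x$1 / l) = 1" "plateau' (x$2 / H) \<le> -1"
      using pos plateau_inner[of "x$1 / l"]
      by (auto simp: mem_cbox_vector2 abs_div divide_le_eq le_divide_eq intro!: plateau'_le_neg_one)
    moreover have "1 / H \<le> - plateau' (x$2 / H) / H"
      using calculation(2) pos by (intro divide_right_mono) auto
    ultimately show ?thesis using True by (simp add: bump_dx2_def)
  next
    case outside: False
    show ?thesis
    proof (cases "\<bar>x$1\<bar> < 2 * l \<and> \<bar>x$2\<bar> < 2 * H")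
      case True
      then have "x \<in> C" "x \<in> ball 0 r"
        using x S_eps_subset[OF \<epsilon>] admissible_scales_in_ball[OF adm] by auto
      then have "plateau' (x$2 / H) \<le> 0" using C_near_origin pos by (simp add: plateau'_nonpos)
      then show ?thesis using outside plateau_bounds[of "x$1 / l"] pos
        by (simp add: bump_dx2_def mult_nonneg_nonpos divide_nonpos_pos)
    next
      case False
      then show ?thesis using outside bump_dx_outer[OF pos] by (auto simp: not_less)
    qed
  qed
qed

lemma integral_bump_slope_sq_le:
  assumes adm: "admissible_scales \<epsilon> l H g"
  shows "integrable (lebesgue_on (Omega_eps C S0 \<epsilon>)) (\<lambda>x. (\<bar>bump_dx1 l H x\<bar> + \<bar>bump_dx2 l H x\<bar>)\<^sup>2)"
    and "integral\<^sup>L (lebesgue_on (Omega_eps C S0 \<epsilon>)) (\<lambda>x. (\<bar>bump_dx1 l H x\<bar> + \<bar>bump_dx2 l H x\<bar>)\<^sup>2)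
      \<le> 32 * g / l"
proof -
  have pos: "0 < l" "0 < H" "0 < g" using adm by (auto simp: admissible_scales_def)
  have \<Omega>: "Omega_eps C S0 \<epsilon> \<in> lmeasurable"
    using bounded_C open_C compact_S0 by (rule lmeasurable_Omega_eps)
  have "\<bar>(\<bar>bump_dx1 l H x\<bar> + \<bar>bump_dx2 l H x\<bar>)\<^sup>2\<bar> \<le> (4 / l + 4 / H)\<^sup>2" for x
    using abs_bump_dx1_le[OF pos(1)] abs_bump_dx2_le[OF pos(2)] by (simp add: add_mono power_mono)
  then show int: "integrable (lebesgue_on (Omega_eps C S0 \<epsilon>))
      (\<lambda>x. (\<bar>bump_dx1 l H x\<bar> + \<bar>bump_dx2 l H x\<bar>)\<^sup>2)"
    using \<Omega> continuous_on_bump_dx[OF pos(1,2)]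
    by (intro integrable_lebesgue_on_bounded_continuous continuous_intros) (auto intro: continuous_on_subset)
  have "integral\<^sup>L (lebesgue_on (Omega_eps C S0 \<epsilon>)) (\<lambda>x. (\<bar>bump_dx1 l H x\<bar> + \<bar>bump_dx2 l H x\<bar>)\<^sup>2)
      \<le> 16 / l\<^sup>2 * measure lebesgue (cbox (vector [-2 * l, 0]) (vector [0, g]) :: (real^2) set)"
    using bump_slope_sq_le[OF adm] by (intro integral_lebesgue_on_le_indicator[OF \<Omega> _ _ int]) auto
  also have "\<dots> = 32 * g / l"
    using pos by (subst measure_cbox_vector2) (auto simp: power2_eq_square)
  finally show "integral\<^sup>L (lebesgue_on (Omega_eps C S0 \<epsilon>))
      (\<lambda>x. (\<bar>bump_dx1 l H x\<bar> + \<bar>bump_dx2 l H x\<bar>)\<^sup>2) \<le> 32 * g / l" .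
qed

lemma integral_neg_bump_dx2_ge:
  assumes adm: "admissible_scales \<epsilon> l H g"
  shows "l / 4 \<le> integral\<^sup>L (lebesgue_on (S_eps S0 \<epsilon> \<inter> {x. x$1 < 0})) (\<lambda>x. - bump_dx2 l H x)"
proof -
  have pos: "0 < l" "0 < H" using adm by (auto simp: admissible_scales_def)
  have Sm: "S_eps S0 \<epsilon> \<inter> {x. x$1 < 0} \<in> lmeasurable" by (rule lmeasurable_half_solid[OF compact_S0])
  have "l / 4 = 1 / H * measure lebesgue
      (cbox (vector [-l, 5 * H / 4]) (vector [-l / 2, 7 * H / 4]) :: (real^2) set)"
    using pos by (subst measure_cbox_vector2) auto
  also have "\<dots> \<le> integral\<^sup>L (lebesgue_on (S_eps S0 \<epsilon> \<inter> {x. x$1 < 0})) (\<lambda>x. - bump_dx2 l H x)"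
  proof (rule indicator_le_integral_lebesgue_on[OF Sm])
    show "integrable (lebesgue_on (S_eps S0 \<epsilon> \<inter> {x. x$1 < 0})) (\<lambda>x. - bump_dx2 l H x)"
      using abs_bump_dx2_le[OF pos(2)] Sm continuous_on_bump_dx[OF pos]
      by (intro integrable_lebesgue_on_bounded_continuous[where B="4 / H"] continuous_intros)
        (auto intro: continuous_on_subset)
  qed (use rectangle_subset_half_solid[OF adm] indicator_le_neg_bump_dx2[OF adm] in auto)
  finally show ?thesis .
qed

lemma energy_ge_local:
  assumes adm: "admissible_scales \<epsilon> l H g" and sol: "weak_neumann_sol C S0 \<epsilon> U G"
  shows "l ^ 3 / (512 * g) \<le> energy (Omega_eps C S0 \<epsilon>) G"
proof -
  define \<Omega> where "\<Omega> = Omega_eps C S0 \<epsilon>"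
  define k where "k x = \<bar>bump_dx1 l H x\<bar> + \<bar>bump_dx2 l H x\<bar>" for x
  have pos: "0 < l" "0 < H" "0 < g" using adm by (auto simp: admissible_scales_def)
  note slope = integral_bump_slope_sq_le[OF adm, folded \<Omega>_def k_def]
  have "(l / 4)\<^sup>2 \<le> (integral\<^sup>L (lebesgue_on (S_eps S0 \<epsilon> \<inter> {x. x$1 < 0})) (\<lambda>x. - bump_dx2 l H x))\<^sup>2"
    using integral_neg_bump_dx2_ge[OF adm] pos by (intro power_mono) auto
  also have "\<dots> = (integral\<^sup>L (lebesgue_on (S_eps S0 \<epsilon> \<inter> {x. x$1 < 0}))
      (\<lambda>x. bump_dx1 l H x * e2$1 + bump_dx2 l H x * e2$2))\<^sup>2"
    by simp
  also have "\<dots> \<le> integral\<^sup>L (lebesgue_on \<Omega>) (\<lambda>x. (k x)\<^sup>2) * energy \<Omega> G"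
    unfolding \<Omega>_def using slope(1) abs_linear_combination_le bounded_C open_C compact_S0
    by (intro flux_sq_le_energy[OF sol C1c_bump[OF pos(1,2)]])
      (auto simp: \<Omega>_def k_def intro: fmeasurableD lmeasurable_Omega_eps)
  also have "\<dots> \<le> 32 * g / l * energy \<Omega> G"
    using slope(2) energy_nonneg by (rule mult_right_mono)
  finally show ?thesis using pos by (simp add: \<Omega>_def field_simps power2_eq_square power3_eq_cube)
qed

lemma energy_ge_cusp:
  assumes f_le: "\<And>t. f t \<le> \<kappa> * \<bar>t\<bar> powr (1 + \<alpha>)" and "0 \<le> \<kappa>" "2 \<le> \<alpha>"
  shows "\<exists>K>0. \<forall>\<epsilon>\<in>{0<..\<epsilon>s}. \<forall>U G. weak_neumann_sol C S0 \<epsilon> U G \<longrightarrow>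
    energy (Omega_eps C S0 \<epsilon>) G \<ge> K * \<epsilon> powr (3 / (\<alpha> + 1) - 1)"
proof -
  define K where "K = \<kappa> * 2 powr (1 + \<alpha>) + 1"
  define \<epsilon>1 where "\<epsilon>1 = min \<epsilon>s (min ((r / 4) powr (1 + \<alpha>)) (r / 8 / K))"
  have "1 \<le> K" "0 < 1 + \<alpha>" using assms by (simp_all add: K_def)
  then have "0 < \<epsilon>1" using eps_pos r_pos by (simp add: \<epsilon>1_def)
  have adm: "admissible_scales \<epsilon> (\<epsilon> powr (1 / (1 + \<alpha>))) (r / 8) (K * \<epsilon>)"
    if "0 < \<epsilon>" "\<epsilon> \<le> \<epsilon>1" for \<epsilon>
  proof -
    have "\<epsilon> powr (1 / (1 + \<alpha>)) \<le> ((r / 4) powr (1 + \<alpha>)) powr (1 / (1 + \<alpha>))"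
      using that \<open>0 < 1 + \<alpha>\<close> by (intro powr_mono2) (auto simp: \<epsilon>1_def)
    also have "\<dots> = r / 4" using \<open>0 < 1 + \<alpha>\<close> r_pos by (simp add: powr_powr)
    finally have "2 * \<epsilon> powr (1 / (1 + \<alpha>)) + 2 * (r / 8) \<le> r" using r_pos by simp
    moreover have "f t + \<epsilon> \<le> K * \<epsilon>" if "\<bar>t\<bar> \<le> 2 * \<epsilon> powr (1 / (1 + \<alpha>))" for t
      using f_le[of t] cusp_height_le[OF \<open>0 \<le> \<kappa>\<close> \<open>0 < 1 + \<alpha>\<close> \<open>0 < \<epsilon>\<close> that]
      by (simp add: K_def algebra_simps)
    moreover have "K * \<epsilon> \<le> r / 8"
      using that \<open>1 \<le> K\<close> by (simp add: \<epsilon>1_def le_divide_eq mult_ac)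
    ultimately show ?thesis
      using that \<open>1 \<le> K\<close> by (auto simp: admissible_scales_def \<epsilon>1_def)
  qed
  have local: "1 / (512 * K) * \<epsilon> powr (3 / (\<alpha> + 1) - 1) \<le> energy (Omega_eps C S0 \<epsilon>) G"
    if "0 < \<epsilon>" "\<epsilon> \<le> \<epsilon>1" "weak_neumann_sol C S0 \<epsilon> U G" for \<epsilon> U G
  proof -
    have "(\<epsilon> powr (1 / (1 + \<alpha>))) ^ 3 = \<epsilon> powr (3 / (\<alpha> + 1))"
      using that by (simp add: powr_realpow[symmetric] powr_powr add.commute)
    then have "1 / (512 * K) * \<epsilon> powr (3 / (\<alpha> + 1) - 1) = (\<epsilon> powr (1 / (1 + \<alpha>))) ^ 3 / (512 * (K * \<epsilon>))"
      using that by (simp add: powr_diff)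
    also have "\<dots> \<le> energy (Omega_eps C S0 \<epsilon>) G"
      using that adm by (intro energy_ge_local) auto
    finally show ?thesis .
  qed
  show ?thesis
  proof (rule energy_ge_powr_if_local[OF _ \<open>0 < \<epsilon>1\<close>])
    show "0 < measure lebesgue (S0 \<inter> {x. x$1 < 0})"
      using adm[OF \<open>0 < \<epsilon>1\<close> order_refl] by (rule measure_half_S0_pos)
    show "0 < 1 / (512 * K)" using \<open>1 \<le> K\<close> by simp
    show "3 / (\<alpha> + 1) - 1 \<le> 0" using assms by (simp add: divide_le_eq)
  qed (use local in auto)
qed

lemma energy_ge_flat:
  assumes "0 < \<eta>" and f_le: "\<And>t. \<bar>t\<bar> < \<eta> \<Longrightarrow> f t \<le> 0"
  shows "\<exists>K>0. \<forall>\<epsilon>\<in>{0<..\<epsilon>s}. \<forall>U G. weak_neumann_sol C S0 \<epsilon> U G \<longrightarrow>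
    energy (Omega_eps C S0 \<epsilon>) G \<ge> K * \<epsilon> powr (-1)"
proof -
  define l where "l = min (\<eta> / 4) (r / 8)"
  define \<epsilon>1 where "\<epsilon>1 = min \<epsilon>s (r / 8)"
  have "0 < l" "0 < \<epsilon>1" using assms eps_pos r_pos by (simp_all add: l_def \<epsilon>1_def)
  have adm: "admissible_scales \<epsilon> l (r / 8) \<epsilon>" if "0 < \<epsilon>" "\<epsilon> \<le> \<epsilon>1" for \<epsilon>
    using that \<open>0 < l\<close> f_le unfolding admissible_scales_def \<epsilon>1_def l_def by auto
  show ?thesis
  proof (rule energy_ge_powr_if_local[OF _ \<open>0 < \<epsilon>1\<close>])
    show "0 < measure lebesgue (S0 \<inter> {x. x$1 < 0})"
      using adm[OF \<open>0 < \<epsilon>1\<close> order_refl] by (rule measure_half_S0_pos)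
    show "l ^ 3 / 512 * \<epsilon> powr (-1) \<le> energy (Omega_eps C S0 \<epsilon>) G"
      if "0 < \<epsilon>" "\<epsilon> \<le> \<epsilon>1" "\<epsilon> \<le> \<epsilon>s" "weak_neumann_sol C S0 \<epsilon> U G" for \<epsilon> U G
      using energy_ge_local[OF adm that(4)] that by (simp add: powr_neg_one)
  qed (use \<open>0 < l\<close> in auto)
qed

end

lemma obstacle_near_origin_if_local_shape:
  assumes "obstacle C S0 \<epsilon>s" "0 < \<delta>"
    and "\<exists>r>0. C \<inter> ball 0 r = {x \<in> ball 0 r. x$2 > 0}"
    and "\<exists>r>0. \<forall>\<epsilon>\<in>{0..\<epsilon>s}. (C - S_eps S0 \<epsilon>) \<inter> ball 0 r =
      {x. \<bar>x$1\<bar> < \<delta> \<and> 0 < x$2 \<and> x$2 < f (x$1) + \<epsilon>} \<inter> ball 0 r"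
  shows "\<exists>r. obstacle_near_origin C S0 \<epsilon>s r f"
proof -
  obtain r0 r1 where r0: "0 < r0" "C \<inter> ball 0 r0 = {x \<in> ball 0 r0. x$2 > 0}"
    and r1: "0 < r1" "\<forall>\<epsilon>\<in>{0..\<epsilon>s}. (C - S_eps S0 \<epsilon>) \<inter> ball 0 r1 =
      {x. \<bar>x$1\<bar> < \<delta> \<and> 0 < x$2 \<and> x$2 < f (x$1) + \<epsilon>} \<inter> ball 0 r1"
    using assms(3,4) by blast
  define r where "r = min r0 (min r1 \<delta>)"
  have "x \<in> C \<longleftrightarrow> 0 < x$2" if "x \<in> ball 0 r" for x
    using that r0(2) by (auto simp: r_def set_eq_iff)
  moreover have "x \<in> C - S_eps S0 \<epsilon> \<longleftrightarrow> 0 < x$2 \<and> x$2 < f (x$1) + \<epsilon>"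
    if "\<epsilon> \<in> {0<..\<epsilon>s}" "x \<in> ball 0 r" for \<epsilon> x
  proof -
    have "x \<in> ball 0 r1" "\<bar>x$1\<bar> < \<delta>"
      using that(2) component_le_norm_cart[of x 1] by (auto simp: r_def)
    with r1(2) that(1) show ?thesis by (auto simp: set_eq_iff)
  qed
  ultimately have "obstacle_near_origin C S0 \<epsilon>s r f"
    using assms(1,2) r0 r1 unfolding obstacle_near_origin_def obstacle_near_origin_axioms_def
    by (auto simp: r_def)
  then show ?thesis ..
qed

theorem proposition2p2:
  fixes C S0 :: "(real^2) set" and \<epsilon>s :: real
  assumes "smooth_domain C" and "bounded C" and "connected C" and "symmetric1 C"
    and "\<exists>r>0. C \<inter> ball 0 r = {x \<in> ball 0 r. x$2 > 0}"
    and "compact S0" and "connected S0" and "symmetric1 S0"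
    and "\<epsilon>s > 0" and "\<forall>\<epsilon>\<in>{0<..\<epsilon>s}. S_eps S0 \<epsilon> \<subseteq> C"
  shows
    "(\<forall>\<kappa> \<alpha> \<delta>. \<kappa> > 0 \<and> \<alpha> > 2 \<and> \<delta> > 0 \<and>
        (\<exists>r>0. \<forall>\<epsilon>\<in>{0..\<epsilon>s}. (C - S_eps S0 \<epsilon>) \<inter> ball 0 r =
           {x. \<bar>x$1\<bar> < \<delta> \<and> 0 < x$2 \<and> x$2 < \<kappa> * \<bar>x$1\<bar> powr (1 + \<alpha>) + \<epsilon>} \<inter> ball 0 r)
      \<longrightarrow> (\<exists>Calpha>0. \<forall>\<epsilon>\<in>{0<..\<epsilon>s}. \<forall>U G. weak_neumann_sol C S0 \<epsilon> U G \<longrightarrow>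
             energy (Omega_eps C S0 \<epsilon>) G \<ge> Calpha * \<epsilon> powr (3 / (\<alpha> + 1) - 1)))
   \<and> (\<forall>h \<delta>. smooth_fun h \<and> (\<forall>t. h t \<ge> 0) \<and> (\<exists>\<eta>>0. \<forall>t. \<bar>t\<bar> < \<eta> \<longrightarrow> h t = 0) \<and> \<delta> > 0 \<and>
        (\<exists>r>0. \<forall>\<epsilon>\<in>{0..\<epsilon>s}. (C - S_eps S0 \<epsilon>) \<inter> ball 0 r =
           {x. \<bar>x$1\<bar> < \<delta> \<and> 0 < x$2 \<and> x$2 < h (x$1) + \<epsilon>} \<inter> ball 0 r)
      \<longrightarrow> (\<exists>Cinf>0. \<forall>\<epsilon>\<in>{0<..\<epsilon>s}. \<forall>U G. weak_neumann_sol C S0 \<epsilon> U G \<longrightarrow>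
             energy (Omega_eps C S0 \<epsilon>) G \<ge> Cinf * \<epsilon> powr (-1)))"
proof -
  have obst: "obstacle C S0 \<epsilon>s"
    using assms unfolding obstacle_def smooth_domain_def by auto
  show ?thesis
  proof (intro conjI allI impI; elim conjE)
    fix \<kappa> \<alpha> \<delta> :: real
    assume "0 < \<kappa>" "2 < \<alpha>" "0 < \<delta>" and shape: "\<exists>r>0. \<forall>\<epsilon>\<in>{0..\<epsilon>s}. (C - S_eps S0 \<epsilon>) \<inter> ball 0 r =
      {x. \<bar>x$1\<bar> < \<delta> \<and> 0 < x$2 \<and> x$2 < \<kappa> * \<bar>x$1\<bar> powr (1 + \<alpha>) + \<epsilon>} \<inter> ball 0 r"
    obtain r where "obstacle_near_origin C S0 \<epsilon>s r (\<lambda>t. \<kappa> * \<bar>t\<bar> powr (1 + \<alpha>))"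
      using obstacle_near_origin_if_local_shape[OF obst \<open>0 < \<delta>\<close> assms(5), of "\<lambda>t. \<kappa> * \<bar>t\<bar> powr (1 + \<alpha>)"]
        shape by auto
    then show "\<exists>Calpha>0. \<forall>\<epsilon>\<in>{0<..\<epsilon>s}. \<forall>U G. weak_neumann_sol C S0 \<epsilon> U G \<longrightarrow>
        energy (Omega_eps C S0 \<epsilon>) G \<ge> Calpha * \<epsilon> powr (3 / (\<alpha> + 1) - 1)"
      by (rule obstacle_near_origin.energy_ge_cusp) (use \<open>0 < \<kappa>\<close> \<open>2 < \<alpha>\<close> in auto)
  next
    fix h :: "real \<Rightarrow> real" and \<delta> :: real
    assume flat: "\<exists>\<eta>>0. \<forall>t. \<bar>t\<bar> < \<eta> \<longrightarrow> h t = 0" and "0 < \<delta>" and shape: "\<exists>r>0. \<forall>\<epsilon>\<in>{0..\<epsilon>s}.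
      (C - S_eps S0 \<epsilon>) \<inter> ball 0 r = {x. \<bar>x$1\<bar> < \<delta> \<and> 0 < x$2 \<and> x$2 < h (x$1) + \<epsilon>} \<inter> ball 0 r"
    obtain r where "obstacle_near_origin C S0 \<epsilon>s r h"
      using obstacle_near_origin_if_local_shape[OF obst \<open>0 < \<delta>\<close> assms(5) shape] by blast
    moreover obtain \<eta> where "0 < \<eta>" "\<And>t. \<bar>t\<bar> < \<eta> \<Longrightarrow> h t = 0" using flat by blast
    ultimately show "\<exists>Cinf>0. \<forall>\<epsilon>\<in>{0<..\<epsilon>s}. \<forall>U G. weak_neumann_sol C S0 \<epsilon> U G \<longrightarrow>
        energy (Omega_eps C S0 \<epsilon>) G \<ge> Cinf * \<epsilon> powr (-1)"
      by (intro obstacle_near_origin.energy_ge_flat) auto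
  qed
qed

end
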